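(* Let $n\ge2$ and $D=\mathrm{pdiag}(d_1,\dots,d_n)$ with $d_1\le\dots\le d_n$. Then $\Gamma(D_\lambda)=D_\lambda\oplus D_\lambda^2$.
   Context: Max-plus conventions: $\varepsilon=-\infty$, $\oplus=\max$ (entrywise for matrices), $\otimes=+$, $(A\otimes B)_{ij}=\max_t(A_{it}+B_{tj})$, $A^k$ the $k$-fold max-plus power, $(\alpha\otimes A)_{ij}=\alpha+A_{ij}$. $\mathrm{pdiag}(d_1,\dots,d_n)$ is the matrix with real diagonal entries $d_i$ and off-diagonal entries equal to the real number $0$. For finite $A\in\mathbb{R}^{n\times n}$: $\lambda(A)$ is the maximum cycle mean $\max\{(a_{i_1i_2}+\dots+a_{i_ki_1})/k\}$ over $k\ge1$ and distinct $i_1,\dots,i_k\in[n]$; $A_\lambda=(-\lambda(A))\otimes A$; $\Gamma(A)=A\oplus A^2\oplus\dots\oplus A^n$. *)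

theory Defs
  imports Main "HOL.Real"
begin

(* Finite n x n real matrices, represented as functions on indices 0..n-1
   (entries outside {..<n} are irrelevant). Max-plus operations. *)
type_synonym mat = "nat \<Rightarrow> nat \<Rightarrow> real"

definition mp_mult :: "nat \<Rightarrow> mat \<Rightarrow> mat \<Rightarrow> mat" where
  "mp_mult n A B = (\<lambda>i j. Max ((\<lambda>t. A i t + B t j) ` {..<n}))"

definition mp_plus :: "mat \<Rightarrow> mat \<Rightarrow> mat" where
  "mp_plus A B = (\<lambda>i j. max (A i j) (B i j))"

(* k-fold max-plus power, k >= 1; the case k = 0 is a junk value never used *)
fun mp_pow :: "nat \<Rightarrow> mat \<Rightarrow> nat \<Rightarrow> mat" where
  "mp_pow n A 0 = A"
| "mp_pow n A (Suc 0) = A"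
| "mp_pow n A (Suc (Suc k)) = mp_mult n A (mp_pow n A (Suc k))"

definition mp_smult :: "real \<Rightarrow> mat \<Rightarrow> mat" where
  "mp_smult a A = (\<lambda>i j. a + A i j)"

definition cycles :: "nat \<Rightarrow> nat list set" where
  "cycles n = {xs. xs \<noteq> [] \<and> distinct xs \<and> set xs \<subseteq> {..<n}}"

definition cycle_mean :: "mat \<Rightarrow> nat list \<Rightarrow> real" where
  "cycle_mean A xs =
     (\<Sum>j<length xs. A (xs ! j) (xs ! ((j + 1) mod length xs))) / real (length xs)"

definition mcm :: "nat \<Rightarrow> mat \<Rightarrow> real" where
  "mcm n A = Max (cycle_mean A ` cycles n)"

definition lam_norm :: "nat \<Rightarrow> mat \<Rightarrow> mat" where
  "lam_norm n A = mp_smult (- mcm n A) A"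

definition Gamma :: "nat \<Rightarrow> mat \<Rightarrow> mat" where
  "Gamma n A = (\<lambda>i j. Max ((\<lambda>k. mp_pow n A k i j) ` {1..n}))"

definition pdiag :: "(nat \<Rightarrow> real) \<Rightarrow> mat" where
  "pdiag d = (\<lambda>i j. if i = j then d i else 0)"

end

theory Submission
  imports Defs
begin

text \<open>Every cycle of length at least two has mean 0 in \<open>pdiag d\<close>, so
  \<open>\<lambda> = max 0 (max d\<^sub>i) \<ge> 0\<close>, and every entry of \<open>A = D\<^sub>\<lambda>\<close> is at most 0 while
  its off-diagonal entries equal \<open>-\<lambda>\<close>. The matrix \<open>M\<close> with \<open>M\<^sub>i\<^sub>i = max (A\<^sub>i\<^sub>i) (-2\<lambda>)\<close>
  and \<open>M\<^sub>i\<^sub>j = -\<lambda>\<close> off the diagonal dominates \<open>A\<close> and satisfies \<open>A \<otimes> M \<le> M\<close>,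
  hence dominates every power of \<open>A\<close>; and \<open>M \<le> A \<oplus> A\<^sup>2\<close>, the diagonal value
  \<open>-2\<lambda>\<close> being reached by the 2-cycle through \<open>i\<close> and any other index.\<close>

lemma finite_cycles: "finite (cycles n)"
proof -
  have "cycles n \<subseteq> {xs. set xs \<subseteq> {..<n} \<and> length xs \<le> n}"
    unfolding cycles_def
    by (auto simp: distinct_card[symmetric] dest: card_mono[of "{..<n}", rotated])
  moreover have "finite {xs. set xs \<subseteq> {..<n} \<and> length xs \<le> n}"
    by (rule finite_lists_length_le) simp
  ultimately show ?thesis by (rule finite_subset)
qed

lemma cycle_mean_le_mcm: "xs \<in> cycles n \<Longrightarrow> cycle_mean A xs \<le> mcm n A"
  unfolding mcm_def using finite_cycles by auto

lemma mp_mult_le: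
  assumes "n > 0" and "\<And>t. t < n \<Longrightarrow> A i t + B t j \<le> c"
  shows "mp_mult n A B i j \<le> c"
  unfolding mp_mult_def using assms by (subst Max_le_iff) auto

lemma mp_mult_ge: "t < n \<Longrightarrow> A i t + B t j \<le> mp_mult n A B i j"
  unfolding mp_mult_def by (intro Max_ge) auto

lemma mp_pow_le_closed_upper_bound:
  assumes "n > 0"
    and "\<And>i j. i < n \<Longrightarrow> j < n \<Longrightarrow> A i j \<le> M i j"
    and "\<And>i t j. i < n \<Longrightarrow> t < n \<Longrightarrow> j < n \<Longrightarrow> A i t + M t j \<le> M i j"
    and "i < n" "j < n"
  shows "mp_pow n A k i j \<le> M i j"
  using assms
proof (induction n A k arbitrary: i j rule: mp_pow.induct)
  case (3 n A k)
  note closed = "3.prems"(3) and ij = "3.prems"(4,5)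
  show ?case
    unfolding mp_pow.simps
  proof (rule mp_mult_le[OF \<open>n > 0\<close>])
    fix t assume "t < n"
    then have "A i t + mp_pow n A (Suc k) t j \<le> A i t + M t j"
      using "3.IH" "3.prems"(1-3) ij by simp
    also have "\<dots> \<le> M i j" using closed \<open>t < n\<close> ij by simp
    finally show "A i t + mp_pow n A (Suc k) t j \<le> M i j" .
  qed
qed simp_all

lemma Gamma_le:
  assumes "n > 0" and "\<And>k. k \<in> {1..n} \<Longrightarrow> mp_pow n A k i j \<le> c"
  shows "Gamma n A i j \<le> c"
  unfolding Gamma_def using assms by (subst Max_le_iff) auto

lemma mp_pow_le_Gamma: "k \<in> {1..n} \<Longrightarrow> mp_pow n A k i j \<le> Gamma n A i j"
  unfolding Gamma_def by (intro Max_ge) auto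

lemma Gamma_eq_mp_plus_sq:
  assumes "n \<ge> 2"
    and A_le: "\<And>i j. i < n \<Longrightarrow> j < n \<Longrightarrow> A i j \<le> M i j"
    and closed: "\<And>i t j. i < n \<Longrightarrow> t < n \<Longrightarrow> j < n \<Longrightarrow> A i t + M t j \<le> M i j"
    and M_le: "\<And>i j. i < n \<Longrightarrow> j < n \<Longrightarrow> M i j \<le> mp_plus A (mp_pow n A 2) i j"
    and "i < n" "j < n"
  shows "Gamma n A i j = mp_plus A (mp_pow n A 2) i j"
proof (rule antisym)
  have "mp_pow n A k i j \<le> mp_plus A (mp_pow n A 2) i j" for k
  proof -
    have "mp_pow n A k i j \<le> M i j"
      using assms by (intro mp_pow_le_closed_upper_bound[of n A M]) simp_all
    also have "\<dots> \<le> mp_plus A (mp_pow n A 2) i j"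
      using M_le \<open>i < n\<close> \<open>j < n\<close> .
    finally show ?thesis .
  qed
  then show "Gamma n A i j \<le> mp_plus A (mp_pow n A 2) i j"
    using \<open>n \<ge> 2\<close> by (intro Gamma_le) simp_all
  have "mp_pow n A 1 i j \<le> Gamma n A i j" "mp_pow n A 2 i j \<le> Gamma n A i j"
    using \<open>n \<ge> 2\<close> by (intro mp_pow_le_Gamma; simp)+
  then show "mp_plus A (mp_pow n A 2) i j \<le> Gamma n A i j"
    by (simp add: mp_plus_def)
qed

lemma diag_le_mcm_pdiag: "i < n \<Longrightarrow> d i \<le> mcm n (pdiag d)"
  using cycle_mean_le_mcm[of "[i]" n "pdiag d"]
  by (simp add: cycles_def cycle_mean_def pdiag_def)

lemma mcm_pdiag_nonneg: "n \<ge> 2 \<Longrightarrow> 0 \<le> mcm n (pdiag d)"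
  using cycle_mean_le_mcm[of "[0, 1]" n "pdiag d"]
  by (auto simp: cycles_def cycle_mean_def pdiag_def)

theorem lemma5p2:
  fixes n :: nat and d :: "nat \<Rightarrow> real"
  assumes "n \<ge> 2"
    and "\<And>i j. i \<le> j \<Longrightarrow> j < n \<Longrightarrow> d i \<le> d j"
  shows "\<forall>i<n. \<forall>j<n.
           Gamma n (lam_norm n (pdiag d)) i j
           = mp_plus (lam_norm n (pdiag d)) (mp_pow n (lam_norm n (pdiag d)) 2) i j"
proof -
  define m where "m = mcm n (pdiag d)"
  define A where "A = lam_norm n (pdiag d)"
  define M where "M i j = (if i = j then max (A i i) (- 2 * m) else - m)" for i j
  have A: "A i j = (if i = j then d i else 0) - m" for i j
    unfolding A_def lam_norm_def mp_smult_def pdiag_def m_def by simp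
  have m: "0 \<le> m" "\<And>i. i < n \<Longrightarrow> d i \<le> m"
    unfolding m_def using assms(1) by (simp_all add: mcm_pdiag_nonneg diag_le_mcm_pdiag)
  have M_le: "M i i \<le> mp_plus A (mp_pow n A 2) i i" if "i < n" for i
  proof -
    define t where "t = (if i = 0 then 1 else 0 :: nat)"
    have "t < n" "t \<noteq> i" using assms(1) by (auto simp: t_def)
    with mp_mult_ge[OF \<open>t < n\<close>, of A i A i] show ?thesis
      by (auto simp: M_def A mp_plus_def numeral_2_eq_2)
  qed
  have "Gamma n A i j = mp_plus A (mp_pow n A 2) i j" if "i < n" "j < n" for i j
  proof (rule Gamma_eq_mp_plus_sq[where M = M, OF assms(1) _ _ _ that])
    show "A i j \<le> M i j" for i j using m(1) by (simp add: M_def A)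
    show "A i t + M t j \<le> M i j" if "i < n" "t < n" for i t j
      using m that by (auto simp: M_def A)
    show "M i j \<le> mp_plus A (mp_pow n A 2) i j" if "i < n" for i j
      using M_le[OF that] by (cases "i = j") (simp_all add: M_def mp_plus_def A)
  qed
  then show ?thesis unfolding A_def by simp
qed

end
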